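(* Let $A$ be a physical system of dimension $m$ whose Hamiltonian has a non-degenerate Bohr spectrum, with energy eigenbasis $\{|x\rangle\}$, and let $\gamma^A$ be its Gibbs state, with diagonal vector $\mathbf{g}$. Let $\rho=\sum_{x,y}r_{xy}|x\rangle\langle y|$ and $\sigma=\sum_{x,y}s_{xy}|x\rangle\langle y|$ be states on $A$ with $r_{xy}\neq0$ for all $x\neq y$, and let $\mathbf{r}=(r_{xx})_x$, $\mathbf{s}=(s_{xx})_x$. Then there exists $\mathcal{E}\in\mathrm{GPC}(A\to A)$ with $\mathcal{E}(\rho)=\sigma$ if and only if there exists an $m\times m$ column stochastic matrix $P=(p_{y|x})$ (entry in row $y$, column $x$) such that $P\mathbf{r}=\mathbf{s}$, $P\mathbf{g}=\mathbf{g}$, and $$\sum_{x=1}^m p_{x|x}|x\rangle\langle x|+\sum_{x\neq y\in[m]}\frac{s_{xy}}{r_{xy}}|x\rangle\langle y|\geq0.$$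
   Context: The Hamiltonian $H^A=\sum_x a_x|x\rangle\langle x|$ has a non-degenerate Bohr spectrum if for all $x,y,x',y'$: $a_x-a_y=a_{x'}-a_{y'}$ holds iff ($x=x'$ and $y=y'$) or ($x=y$ and $x'=y'$). For fixed inverse temperature $\beta>0$ the Gibbs state is $\gamma^A=e^{-\beta H^A}/\mathrm{Tr}[e^{-\beta H^A}]$. $\mathrm{GPC}(A\to A)$ is the set of quantum channels $\mathcal{E}:A\to A$ with $\mathcal{E}(\gamma^A)=\gamma^A$ and $\mathcal{E}(e^{-iH^At}\rho e^{iH^At})=e^{-iH^At}\mathcal{E}(\rho)e^{iH^At}$ for all $t\in\mathbb{R}$ and states $\rho$. *)

theory Defs
  imports Complex_Main
begin

text \<open>Operators on the system A are represented as matrices in the energy eigenbasis,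
  indexed by a finite type 'a (so the dimension is m = CARD('a)).
  An operator X is the function X x y = <x|X|y>.\<close>

type_synonym 'a op = "'a \<Rightarrow> 'a \<Rightarrow> complex"

definition psd_on :: "'i set \<Rightarrow> ('i \<Rightarrow> 'i \<Rightarrow> complex) \<Rightarrow> bool" where
  "psd_on I M \<longleftrightarrow>
     (\<forall>x\<in>I. \<forall>y\<in>I. M y x = cnj (M x y)) \<and>
     (\<forall>v :: 'i \<Rightarrow> complex. 0 \<le> Re (\<Sum>x\<in>I. \<Sum>y\<in>I. cnj (v x) * M x y * v y))"

definition psd :: "('a::finite) op \<Rightarrow> bool" where
  "psd M \<longleftrightarrow> psd_on UNIV M"

definition trace :: "('a::finite) op \<Rightarrow> complex" where
  "trace M = (\<Sum>x\<in>UNIV. M x x)"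

definition is_state :: "('a::finite) op \<Rightarrow> bool" where
  "is_state \<rho> \<longleftrightarrow> psd \<rho> \<and> trace \<rho> = 1"

definition clinear_map :: "(('a::finite) op \<Rightarrow> 'a op) \<Rightarrow> bool" where
  "clinear_map E \<longleftrightarrow>
     (\<forall>c X Y. E (\<lambda>x y. c * X x y + Y x y) = (\<lambda>x y. c * E X x y + E Y x y))"

text \<open>Complete positivity: for every ancilla dimension k, id_k \<otimes> E is positive.
  Operators on C^k \<otimes> A are matrices indexed by {..<k} \<times> 'a; (id \<otimes> E) acts blockwise.\<close>
definition completely_positive :: "(('a::finite) op \<Rightarrow> 'a op) \<Rightarrow> bool" where
  "completely_positive E \<longleftrightarrow>
     (\<forall>k::nat. \<forall>X :: (nat \<times> 'a) \<Rightarrow> (nat \<times> 'a) \<Rightarrow> complex.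
        psd_on ({..<k} \<times> UNIV) X \<longrightarrow>
        psd_on ({..<k} \<times> UNIV)
          (\<lambda>(i, x) (j, y). E (\<lambda>x' y'. X (i, x') (j, y')) x y))"

definition trace_preserving :: "(('a::finite) op \<Rightarrow> 'a op) \<Rightarrow> bool" where
  "trace_preserving E \<longleftrightarrow> (\<forall>X. trace (E X) = trace X)"

definition quantum_channel :: "(('a::finite) op \<Rightarrow> 'a op) \<Rightarrow> bool" where
  "quantum_channel E \<longleftrightarrow> clinear_map E \<and> completely_positive E \<and> trace_preserving E"

text \<open>Hamiltonian H = \<Sum>_x a x |x><x|.\<close>
definition nondegenerate_bohr :: "('a \<Rightarrow> real) \<Rightarrow> bool" where
  "nondegenerate_bohr a \<longleftrightarrow>
     (\<forall>x y x' y'. a x - a y = a x' - a y' \<longleftrightarrow> (x = x' \<and> y = y') \<or> (x = y \<and> x' = y'))"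

definition gibbs_vec :: "real \<Rightarrow> (('a::finite) \<Rightarrow> real) \<Rightarrow> 'a \<Rightarrow> real" where
  "gibbs_vec \<beta> a x = exp (- \<beta> * a x) / (\<Sum>y\<in>UNIV. exp (- \<beta> * a y))"

definition gibbs_state :: "real \<Rightarrow> (('a::finite) \<Rightarrow> real) \<Rightarrow> 'a op" where
  "gibbs_state \<beta> a = (\<lambda>x y. if x = y then complex_of_real (gibbs_vec \<beta> a x) else 0)"

definition time_evol :: "('a \<Rightarrow> real) \<Rightarrow> real \<Rightarrow> 'a op \<Rightarrow> 'a op" where
  "time_evol a t X = (\<lambda>x y. cis (- (a x * t)) * X x y * cis (a y * t))"

definition GPC :: "real \<Rightarrow> (('a::finite) \<Rightarrow> real) \<Rightarrow> ('a op \<Rightarrow> 'a op) \<Rightarrow> bool" where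
  "GPC \<beta> a E \<longleftrightarrow> quantum_channel E \<and> E (gibbs_state \<beta> a) = gibbs_state \<beta> a \<and>
     (\<forall>t::real. \<forall>\<rho>. is_state \<rho> \<longrightarrow> E (time_evol a t \<rho>) = time_evol a t (E \<rho>))"

text \<open>Column stochastic: P y x is the entry in row y, column x.\<close>
definition column_stochastic :: "(('a::finite) \<Rightarrow> 'a \<Rightarrow> real) \<Rightarrow> bool" where
  "column_stochastic P \<longleftrightarrow> (\<forall>x y. 0 \<le> P y x) \<and> (\<forall>x. (\<Sum>y\<in>UNIV. P y x) = 1)"

end

theory Submission
  imports Defs
begin

text \<open>Covariance under the time evolution forces E(|z><z'|) to oscillate with the Bohr frequency
  a z - a z'. With a non-degenerate Bohr spectrum, a GPC map therefore sends populations to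
  populations, through the column stochastic matrix P y x = <y|E(|x><x|)|y>, and multiplies each
  coherence |y><y'| by the scalar <y|E(|y><y'|)|y'>; with P x x on the diagonal these scalars form
  a principal submatrix of the Choi matrix of E, hence a positive semidefinite matrix N, and
  N y y' = \<sigma> y y' / \<rho> y y' because \<rho> has no vanishing coherence. Conversely, the map acting
  by P on populations and by Schur multiplication with N on coherences is completely positive by
  the Schur product theorem, and it is trace preserving, Gibbs preserving and covariant.\<close>

definition qform :: "'i set \<Rightarrow> ('i \<Rightarrow> 'i \<Rightarrow> complex) \<Rightarrow> ('i \<Rightarrow> complex) \<Rightarrow> complex" where
  "qform I M v = (\<Sum>x\<in>I. \<Sum>y\<in>I. cnj (v x) * M x y * v y)"

lemma psd_on_iff:
  "psd_on I M \<longleftrightarrow> (\<forall>x\<in>I. \<forall>y\<in>I. M y x = cnj (M x y)) \<and> (\<forall>v. 0 \<le> Re (qform I M v))"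
  by (simp add: psd_on_def qform_def)

lemma psd_onI:
  assumes "\<And>x y. x \<in> I \<Longrightarrow> y \<in> I \<Longrightarrow> M y x = cnj (M x y)" and "\<And>v. 0 \<le> Re (qform I M v)"
  shows "psd_on I M"
  unfolding psd_on_iff using assms by blast

lemma psd_on_hermitian: "psd_on I M \<Longrightarrow> x \<in> I \<Longrightarrow> y \<in> I \<Longrightarrow> M y x = cnj (M x y)"
  unfolding psd_on_iff by blast

lemma psd_on_qform_nonneg: "psd_on I M \<Longrightarrow> 0 \<le> Re (qform I M v)"
  unfolding psd_on_iff by blast

lemma qform_cong:
  "(\<And>x y. x \<in> I \<Longrightarrow> y \<in> I \<Longrightarrow> M x y = M' x y) \<Longrightarrow> qform I M v = qform I M' v"
  unfolding qform_def by (auto intro!: sum.cong)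

lemma psd_on_cong:
  assumes "\<And>x y. x \<in> I \<Longrightarrow> y \<in> I \<Longrightarrow> M x y = M' x y"
  shows "psd_on I M \<longleftrightarrow> psd_on I M'"
proof -
  have "(\<forall>x\<in>I. \<forall>y\<in>I. M y x = cnj (M x y)) \<longleftrightarrow> (\<forall>x\<in>I. \<forall>y\<in>I. M' y x = cnj (M' x y))"
    using assms by auto
  then show ?thesis
    unfolding psd_on_iff by (simp add: qform_cong[of I M M', OF assms])
qed

lemma qform_add: "qform I (\<lambda>x y. A x y + B x y) v = qform I A v + qform I B v"
  by (simp add: qform_def sum.distrib algebra_simps)

lemma qform_scale: "qform I (\<lambda>x y. c * A x y) v = c * qform I A v"
  by (simp add: qform_def sum_distrib_left algebra_simps)

lemma qform_congruence:
  "qform I (\<lambda>x y. cnj (u x) * M x y * u y) v = qform I M (\<lambda>x. u x * v x)"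
  by (simp add: qform_def algebra_simps)

lemma psd_on_add:
  assumes "psd_on I A" "psd_on I B"
  shows "psd_on I (\<lambda>x y. A x y + B x y)"
proof (rule psd_onI)
  show "A y x + B y x = cnj (A x y + B x y)" if "x \<in> I" "y \<in> I" for x y
    using psd_on_hermitian[OF assms(1) that] psd_on_hermitian[OF assms(2) that] by simp
  show "0 \<le> Re (qform I (\<lambda>x y. A x y + B x y) v)" for v
    using psd_on_qform_nonneg[OF assms(1)] psd_on_qform_nonneg[OF assms(2)] by (simp add: qform_add)
qed

lemma psd_on_scale:
  assumes "0 \<le> c" "psd_on I A"
  shows "psd_on I (\<lambda>x y. of_real c * A x y)"
proof (rule psd_onI)
  show "of_real c * A y x = cnj (of_real c * A x y)" if "x \<in> I" "y \<in> I" for x y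
    using psd_on_hermitian[OF assms(2) that] by simp
  show "0 \<le> Re (qform I (\<lambda>x y. of_real c * A x y) v)" for v
    using psd_on_qform_nonneg[OF assms(2)] assms(1) by (simp add: qform_scale)
qed

lemma psd_on_sum:
  "finite L \<Longrightarrow> (\<And>l. l \<in> L \<Longrightarrow> psd_on I (A l)) \<Longrightarrow> psd_on I (\<lambda>x y. \<Sum>l\<in>L. A l x y)"
proof (induction L rule: finite_induct)
  case empty
  show ?case by (rule psd_onI) (simp_all add: qform_def)
next
  case (insert l L)
  then show ?case by (simp add: psd_on_add)
qed

lemma psd_on_congruence:
  assumes "psd_on I M"
  shows "psd_on I (\<lambda>x y. cnj (u x) * M x y * u y)"
proof (rule psd_onI)
  show "cnj (u y) * M y x * u x = cnj (cnj (u x) * M x y * u y)" if "x \<in> I" "y \<in> I" for x y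
    using psd_on_hermitian[OF assms that] by simp
  show "0 \<le> Re (qform I (\<lambda>x y. cnj (u x) * M x y * u y) v)" for v
    using psd_on_qform_nonneg[OF assms] by (simp add: qform_congruence)
qed

lemma psd_on_rank_one: "psd_on I (\<lambda>x y. cnj (u x) * u y)"
proof -
  have "psd_on I (\<lambda>x y. 1)"
  proof (rule psd_onI)
    fix v :: "'a \<Rightarrow> complex"
    define S where "S = (\<Sum>x\<in>I. v x)"
    have "qform I (\<lambda>x y. 1) v = cnj S * S"
      by (simp add: qform_def S_def sum_product)
    also have "\<dots> = of_real ((cmod S)\<^sup>2)"
      by (metis complex_norm_square mult.commute)
    finally show "0 \<le> Re (qform I (\<lambda>x y. 1) v)" by simp
  qed simp
  then show ?thesis using psd_on_congruence[of I "\<lambda>x y. 1" u] by simp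
qed

lemma psd_on_diag:
  assumes "finite I" "psd_on I M" "x \<in> I"
  shows "M x x = of_real (Re (M x x))" and "0 \<le> Re (M x x)"
proof -
  show "M x x = of_real (Re (M x x))"
    using psd_on_hermitian[OF assms(2,3,3)] by (simp add: complex_eq_iff)
  have "qform I M (\<lambda>y. of_bool (y = x))
      = (\<Sum>x'\<in>I. if x' = x then (\<Sum>y\<in>I. if y = x then M x' y else 0) else 0)"
    unfolding qform_def by (auto intro!: sum.cong)
  also have "\<dots> = M x x"
    using assms(1,3) by simp
  finally have "qform I M (\<lambda>y. of_bool (y = x)) = M x x" .
  then show "0 \<le> Re (M x x)" using psd_on_qform_nonneg[OF assms(2)] by metis
qed

lemma qform_mono_neutral:
  assumes "finite I" "S \<subseteq> I" "\<And>x. x \<in> I - S \<Longrightarrow> v x = 0"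
  shows "qform I M v = qform S M v"
proof -
  have "qform I M v = (\<Sum>x\<in>S. \<Sum>y\<in>I. cnj (v x) * M x y * v y)"
    unfolding qform_def using assms by (intro sum.mono_neutral_right) auto
  also have "\<dots> = qform S M v"
    unfolding qform_def using assms by (intro sum.cong refl sum.mono_neutral_right) auto
  finally show ?thesis .
qed

lemma qform_insert:
  assumes "finite I" "z \<notin> I"
  shows "qform (insert z I) M v = cnj (v z) * M z z * v z + cnj (v z) * (\<Sum>y\<in>I. M z y * v y)
    + (\<Sum>x\<in>I. cnj (v x) * M x z) * v z + qform I M v"
  using assms
  by (simp add: qform_def sum.distrib sum_distrib_left sum_distrib_right algebra_simps)

lemma psd_on_zero_diag_row:
  assumes "finite I" "psd_on I M" "z \<in> I" "y \<in> I" "M z z = 0"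
  shows "M z y = 0"
proof (rule ccontr)
  assume "M z y \<noteq> 0"
  define b where "b = M z y"
  define r where "r = (\<bar>Re (M y y)\<bar> + 1) / (2 * (cmod b)\<^sup>2)"
  have r: "r * (2 * (cmod b)\<^sup>2) = \<bar>Re (M y y)\<bar> + 1"
    using \<open>M z y \<noteq> 0\<close> by (simp add: r_def b_def)
  have "y \<noteq> z" using \<open>M z y \<noteq> 0\<close> assms(5) by auto
  define v where "v = (\<lambda>x. if x = z then - of_real r * b else if x = y then 1 else 0)"
  have "qform I M v = qform {z, y} M v"
    using assms by (intro qform_mono_neutral) (auto simp: v_def)
  also have "\<dots> = - of_real r * (cnj b * M z y + M y z * b) + M y y"
    using \<open>y \<noteq> z\<close> assms(5) by (simp add: qform_def v_def algebra_simps)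
  also have "\<dots> = - of_real (2 * r * (cmod b)\<^sup>2) + M y y"
    using psd_on_hermitian[OF assms(2,3,4)]
    by (simp add: b_def complex_mult_cnj cmod_power2 algebra_simps)
  finally have "Re (qform I M v) = Re (M y y) - 2 * r * (cmod b)\<^sup>2"
    by simp
  also have "\<dots> = Re (M y y) - (\<bar>Re (M y y)\<bar> + 1)"
    using r by (simp add: algebra_simps)
  finally show False
    using psd_on_qform_nonneg[OF assms(2), of v] by linarith
qed

text \<open>If M z z = 0, division by zero makes this the restriction of M to I.\<close>
lemma psd_on_Schur_complement:
  assumes "finite I" "z \<notin> I" "psd_on (insert z I) M"
  shows "psd_on I (\<lambda>x y. M x y - M x z * M z y / M z z)"
proof (rule psd_onI)
  have herm: "M y x = cnj (M x y)" if "x \<in> insert z I" "y \<in> insert z I" for x y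
    using psd_on_hermitian[OF assms(3) that] .
  have Mzz: "cnj (M z z) = M z z"
    using herm[of z z] by simp
  show "M y x - M y z * M z x / M z z = cnj (M x y - M x z * M z y / M z z)"
    if "x \<in> I" "y \<in> I" for x y
    using that herm[of x y] herm[of z y] herm[of x z] Mzz by simp
  fix v
  define s where "s = (\<Sum>y\<in>I. M z y * v y)"
  define t where "t = (\<Sum>x\<in>I. cnj (v x) * M x z)"
  have ts: "t = cnj s"
    unfolding s_def t_def by (auto intro!: sum.cong simp: herm[of z])
  define c where "c = - s / M z z"
  have vI: "x = z \<longleftrightarrow> False" if "x \<in> I" for x
    using that assms(2) by auto
  have "qform (insert z I) M (v(z := c)) = cnj c * M z z * c + cnj c * s + t * c + qform I M v"
    using qform_insert[OF assms(1,2), of M "v(z := c)"]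
    by (simp add: vI s_def t_def qform_def cong: sum.cong)
  also have "\<dots> = qform I M v - t * s / M z z"
  proof (cases "M z z = 0")
    case False
    then show ?thesis
      unfolding c_def ts using Mzz by (simp add: field_simps)
  qed (simp add: c_def)
  also have "t * s / M z z = (\<Sum>x\<in>I. \<Sum>y\<in>I. cnj (v x) * (M x z * M z y / M z z) * v y)"
    unfolding t_def s_def sum_product sum_divide_distrib by (simp add: algebra_simps)
  also have "qform I M v - \<dots> = qform I (\<lambda>x y. M x y - M x z * M z y / M z z) v"
    by (simp add: qform_def sum_subtractf algebra_simps)
  finally show "0 \<le> Re (qform I (\<lambda>x y. M x y - M x z * M z y / M z z) v)"
    using psd_on_qform_nonneg[OF assms(3)] by metis
qed

lemma psd_on_rank_one_decomposition:
  assumes "finite I" "psd_on I M"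
  shows "\<exists>n (c :: nat \<Rightarrow> real) U. (\<forall>l. 0 \<le> c l) \<and>
    (\<forall>x\<in>I. \<forall>y\<in>I. M x y = (\<Sum>l<n. of_real (c l) * cnj (U l x) * U l y))"
  using assms
proof (induction I arbitrary: M rule: finite_induct)
  case empty
  then show ?case by auto
next
  case (insert z I)
  let ?J = "insert z I"
  define d where "d = Re (M z z)"
  have J: "finite ?J" "z \<in> ?J"
    using insert.hyps by simp_all
  have Mzz: "M z z = of_real d" and d: "0 \<le> d"
    unfolding d_def by (fact psd_on_diag[OF J(1) insert.prems J(2)])+
  define M' where "M' = (\<lambda>x y. M x y - M x z * M z y / M z z)"
  obtain n and c :: "nat \<Rightarrow> real" and U where c: "\<forall>l. 0 \<le> c l"
    and U: "\<forall>x\<in>I. \<forall>y\<in>I. M' x y = (\<Sum>l<n. of_real (c l) * cnj (U l x) * U l y)"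
    using insert.IH psd_on_Schur_complement[OF insert.hyps insert.prems] unfolding M'_def by blast
  have herm: "M y x = cnj (M x y)" if "x \<in> ?J" "y \<in> ?J" for x y
    using psd_on_hermitian[OF insert.prems that] .
  have M'_row: "M' z y = 0" if "y \<in> ?J" for y
    using psd_on_zero_diag_row[OF J(1) insert.prems J(2) that] by (auto simp: M'_def)
  have M'_col: "M' x z = 0" if "x \<in> ?J" for x
    using psd_on_zero_diag_row[OF J(1) insert.prems J(2) that] herm[OF that J(2)]
    by (auto simp: M'_def)
  define c' where "c' = c(n := 1 / d)"
  define U' where "U' = (\<lambda>l x. if l < n then (if x = z then 0 else U l x) else M z x)"
  have "M x y = (\<Sum>l<Suc n. of_real (c' l) * cnj (U' l x) * U' l y)"
    if "x \<in> ?J" "y \<in> ?J" for x y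
  proof -
    have "M' x y = (\<Sum>l<n. of_real (c' l) * cnj (U' l x) * U' l y)"
    proof (cases "x = z \<or> y = z")
      case True
      then show ?thesis
        using M'_row M'_col that by (auto simp: U'_def)
    next
      case False
      then have "x \<in> I" "y \<in> I"
        using that by auto
      then show ?thesis
        using False U by (simp add: U'_def c'_def)
    qed
    moreover have "M x z * M z y / M z z = of_real (c' n) * cnj (U' n x) * U' n y"
      using herm[of z x] that Mzz by (simp add: c'_def U'_def)
    ultimately show ?thesis
      by (simp add: M'_def diff_eq_eq)
  qed
  moreover have "\<forall>l. 0 \<le> c' l"
    using c d by (simp add: c'_def)
  ultimately show ?case by blast
qed

lemma psd_on_pullback:
  assumes "finite I" "psd_on I M" "f ` S \<subseteq> I"
  shows "psd_on S (\<lambda>p q. M (f p) (f q))"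
proof -
  obtain n and c :: "nat \<Rightarrow> real" and U where c: "\<forall>l. 0 \<le> c l"
    and U: "\<forall>x\<in>I. \<forall>y\<in>I. M x y = (\<Sum>l<n. of_real (c l) * cnj (U l x) * U l y)"
    using psd_on_rank_one_decomposition[OF assms(1,2)] by blast
  have "M (f p) (f q) = (\<Sum>l<n. of_real (c l) * (cnj (U l (f p)) * U l (f q)))"
    if "p \<in> S" "q \<in> S" for p q
    using U assms(3) that by (simp add: image_subset_iff mult.assoc)
  moreover have "psd_on S (\<lambda>p q. \<Sum>l<n. of_real (c l) * (cnj (U l (f p)) * U l (f q)))"
    using c by (intro psd_on_sum psd_on_scale psd_on_rank_one) auto
  ultimately show ?thesis
    by (subst psd_on_cong)
qed

lemma psd_on_Schur_product:
  assumes "finite S" "psd_on S A" "psd_on S B"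
  shows "psd_on S (\<lambda>p q. A p q * B p q)"
proof -
  obtain n and c :: "nat \<Rightarrow> real" and U where c: "\<forall>l. 0 \<le> c l"
    and U: "\<forall>x\<in>S. \<forall>y\<in>S. A x y = (\<Sum>l<n. of_real (c l) * cnj (U l x) * U l y)"
    using psd_on_rank_one_decomposition[OF assms(1,2)] by blast
  have "A p q * B p q = (\<Sum>l<n. of_real (c l) * (cnj (U l p) * B p q * U l q))"
    if "p \<in> S" "q \<in> S" for p q
    using U that by (simp add: sum_distrib_left sum_distrib_right algebra_simps)
  moreover have "psd_on S (\<lambda>p q. \<Sum>l<n. of_real (c l) * (cnj (U l p) * B p q * U l q))"
    using c assms(3) by (intro psd_on_sum psd_on_scale psd_on_congruence) auto
  ultimately show ?thesis
    by (subst psd_on_cong)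
qed

definition ket_bra :: "'a \<Rightarrow> 'a \<Rightarrow> 'a op" where
  "ket_bra x y = (\<lambda>u w. if u = x \<and> w = y then 1 else 0)"

lemma clinear_mapD:
  "clinear_map E \<Longrightarrow> E (\<lambda>x y. c * X x y + Y x y) = (\<lambda>x y. c * E X x y + E Y x y)"
  by (simp add: clinear_map_def)

lemma clinear_map_zero:
  assumes "clinear_map E"
  shows "E (\<lambda>x y. 0) = (\<lambda>x y. 0)"
  using clinear_mapD[OF assms, of "-1" "\<lambda>x y. 0" "\<lambda>x y. 0"] by simp

lemma clinear_map_scale:
  assumes "clinear_map E"
  shows "E (\<lambda>x y. c * X x y) = (\<lambda>x y. c * E X x y)"
  using clinear_mapD[OF assms, of c X "\<lambda>x y. 0"] clinear_map_zero[OF assms] by simp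

lemma clinear_map_sum:
  assumes "clinear_map E" "finite L"
  shows "E (\<lambda>x y. \<Sum>l\<in>L. A l x y) = (\<lambda>x y. \<Sum>l\<in>L. E (A l) x y)"
  using assms(2)
proof (induction L rule: finite_induct)
  case empty
  then show ?case using clinear_map_zero[OF assms(1)] by simp
next
  case (insert l L)
  then show ?case
    using clinear_mapD[OF assms(1), of 1 "A l" "\<lambda>x y. \<Sum>l\<in>L. A l x y"] by simp
qed

lemma clinear_map_expand:
  fixes E :: "('a::finite) op \<Rightarrow> 'a op"
  assumes "clinear_map E"
  shows "E X u w = (\<Sum>x\<in>UNIV. \<Sum>y\<in>UNIV. X x y * E (ket_bra x y) u w)"
proof -
  have "X x y * ket_bra x y u w = (if y = w then if x = u then X x y else 0 else 0)" for x y u w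
    by (simp add: ket_bra_def)
  then have "X = (\<lambda>u w. \<Sum>x\<in>UNIV. \<Sum>y\<in>UNIV. X x y * ket_bra x y u w)"
    by simp
  then have "E X = E (\<lambda>u w. \<Sum>x\<in>UNIV. \<Sum>y\<in>UNIV. X x y * ket_bra x y u w)"
    by simp
  also have "\<dots> = (\<lambda>u w. \<Sum>x\<in>UNIV. \<Sum>y\<in>UNIV. X x y * E (ket_bra x y) u w)"
    by (simp add: clinear_map_sum[OF assms] clinear_map_scale[OF assms])
  finally show ?thesis
    by simp
qed

lemma completely_positive_Choi_psd:
  fixes E :: "('a::finite) op \<Rightarrow> 'a op"
  assumes "completely_positive E"
  shows "psd_on UNIV (\<lambda>p q. E (ket_bra (fst p) (fst q)) (snd p) (snd q))"
proof -
  define n where "n = card (UNIV :: 'a set)"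
  obtain g where g: "bij_betw g {..<n} (UNIV :: 'a set)"
    using ex_bij_betw_nat_finite[of "UNIV :: 'a set"] by (auto simp: n_def lessThan_atLeast0)
  define S where "S = {..<n} \<times> (UNIV :: 'a set)"
  define f where "f = (\<lambda>p :: nat \<times> 'a. if snd p = g (fst p) then (1 :: complex) else 0)"
  have "psd_on S (\<lambda>p q. cnj (f p) * f q)"
    by (rule psd_on_rank_one)
  then have "psd_on S (\<lambda>(i, x) (j, y). E (\<lambda>x' y'. cnj (f (i, x')) * f (j, y')) x y)"
    using assms unfolding completely_positive_def S_def by blast
  moreover have "(\<lambda>x' y'. cnj (f (i, x')) * f (j, y')) = ket_bra (g i) (g j)" for i j
    by (auto simp: f_def ket_bra_def)
  ultimately have Choi_blocks: "psd_on S (\<lambda>(i, x) (j, y). E (ket_bra (g i) (g j)) x y)"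
    by simp
  define h where "h = (\<lambda>p :: 'a \<times> 'a. (inv_into {..<n} g (fst p), snd p))"
  have "h ` UNIV \<subseteq> S"
    using g inv_into_into[of _ g "{..<n}"] by (auto simp: h_def S_def bij_betw_def)
  moreover have "g (fst (h p)) = fst p" for p
    using g by (simp add: h_def bij_betw_inv_into_right)
  ultimately show ?thesis
    using psd_on_pullback[OF _ Choi_blocks, of h UNIV] by (simp add: S_def h_def)
qed

definition stochastic_Schur_channel :: "('a::finite \<Rightarrow> 'a \<Rightarrow> real) \<Rightarrow> 'a op \<Rightarrow> 'a op \<Rightarrow> 'a op" where
  "stochastic_Schur_channel P N X =
     (\<lambda>y y'. if y = y' then (\<Sum>x\<in>UNIV. of_real (P y x) * X x x) else N y y' * X y y')"

lemma stochastic_Schur_channel_decompose: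
  assumes N_diag: "\<And>x. N x x = of_real (P x x)"
  shows "stochastic_Schur_channel P N Z y y' = (\<Sum>x\<in>UNIV. \<Sum>z\<in>UNIV.
      of_real (if x = z then 0 else P z x) * (cnj (of_bool (y = z)) * Z x x * of_bool (y' = z)))
    + N y y' * Z y y'"
proof (cases "y = y'")
  case True
  have "(\<Sum>x\<in>UNIV. of_real (P y x) * Z x x)
      = (\<Sum>x\<in>UNIV. of_real (if x = y then 0 else P y x) * Z x x + (if x = y then N y y * Z y y else 0))"
    by (intro sum.cong) (auto simp: N_diag)
  then show ?thesis
    using True by (simp add: stochastic_Schur_channel_def sum.distrib of_bool_def
        if_distrib[of "\<lambda>w. _ * w"] if_distrib[of "\<lambda>w. w * _"] cong: if_cong)
next
  case False
  then show ?thesis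
    by (auto simp: stochastic_Schur_channel_def intro!: sum.neutral)
qed

text \<open>The map is the sum of Schur multiplication by N and of the maps
  X \<mapsto> P y x |y><x| X |x><y| for x \<noteq> y; both kinds are completely positive.\<close>
lemma completely_positive_stochastic_Schur_channel:
  fixes P :: "'a::finite \<Rightarrow> 'a \<Rightarrow> real"
  assumes P: "\<And>x y. 0 \<le> P y x" and N: "psd N" and N_diag: "\<And>x. N x x = of_real (P x x)"
  shows "completely_positive (stochastic_Schur_channel P N)"
  unfolding completely_positive_def
proof (intro allI impI)
  fix k :: nat and X :: "nat \<times> 'a \<Rightarrow> nat \<times> 'a \<Rightarrow> complex"
  define S where "S = {..<k} \<times> (UNIV :: 'a set)"
  assume "psd_on ({..<k} \<times> UNIV) X"
  then have X: "psd_on S X" and S: "finite S"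
    by (simp_all add: S_def)
  have "psd_on S (\<lambda>p q. (\<Sum>x\<in>UNIV. \<Sum>z\<in>UNIV. of_real (if x = z then 0 else P z x) *
      (cnj (of_bool (snd p = z)) * X (fst p, x) (fst q, x) * of_bool (snd q = z)))
      + N (snd p) (snd q) * X p q)"
  proof (intro psd_on_add psd_on_sum psd_on_scale psd_on_congruence psd_on_Schur_product)
    show "psd_on S (\<lambda>p q. X (fst p, x) (fst q, x))" for x
      by (rule psd_on_pullback[OF S X]) (auto simp: S_def)
    show "psd_on S (\<lambda>p q. N (snd p) (snd q))"
      using psd_on_pullback[of UNIV N snd S] N by (simp add: psd_def)
  qed (use S X P in auto)
  then show "psd_on ({..<k} \<times> UNIV)
      (\<lambda>(i, x) (j, y). stochastic_Schur_channel P N (\<lambda>x' y'. X (i, x') (j, y')) x y)"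
    by (simp add: S_def case_prod_unfold stochastic_Schur_channel_decompose[OF N_diag])
qed

lemma trace_stochastic_Schur_channel:
  assumes "column_stochastic P"
  shows "trace (stochastic_Schur_channel P N X) = trace X"
proof -
  have "trace (stochastic_Schur_channel P N X) = (\<Sum>y\<in>UNIV. \<Sum>x\<in>UNIV. of_real (P y x) * X x x)"
    by (simp add: trace_def stochastic_Schur_channel_def)
  also have "\<dots> = (\<Sum>x\<in>UNIV. \<Sum>y\<in>UNIV. of_real (P y x) * X x x)"
    by (rule sum.swap)
  also have "\<dots> = (\<Sum>x\<in>UNIV. of_real (\<Sum>y\<in>UNIV. P y x) * X x x)"
    by (simp add: sum_distrib_right)
  also have "\<dots> = trace X"
    using assms by (simp add: column_stochastic_def trace_def)
  finally show ?thesis .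
qed

lemma stochastic_Schur_channel_time_evol:
  "stochastic_Schur_channel P N (time_evol a t X) = time_evol a t (stochastic_Schur_channel P N X)"
proof (intro ext)
  have "cis (- \<theta>) * z * cis \<theta> = z * (cis (- \<theta>) * cis \<theta>)" for \<theta> z
    by (simp only: mult.commute mult.left_commute)
  then have cancel: "cis (- \<theta>) * z * cis \<theta> = z" for \<theta> z
    by (simp add: cis_mult)
  fix y y'
  show "stochastic_Schur_channel P N (time_evol a t X) y y'
      = time_evol a t (stochastic_Schur_channel P N X) y y'"
  proof (cases "y = y'")
    case True
    then show ?thesis
      by (simp add: stochastic_Schur_channel_def time_evol_def cancel)
  next
    case False
    then show ?thesis
      by (simp add: stochastic_Schur_channel_def time_evol_def ac_simps)
  qed
qed

lemma stochastic_Schur_channel_GPC: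
  fixes P :: "'a::finite \<Rightarrow> 'a \<Rightarrow> real"
  assumes P: "column_stochastic P"
    and P_gibbs: "\<And>y. (\<Sum>x\<in>UNIV. P y x * gibbs_vec \<beta> a x) = gibbs_vec \<beta> a y"
    and N: "psd N" and N_diag: "\<And>x. N x x = of_real (P x x)"
  shows "GPC \<beta> a (stochastic_Schur_channel P N)"
proof -
  have "clinear_map (stochastic_Schur_channel P N)"
    by (auto simp: clinear_map_def stochastic_Schur_channel_def fun_eq_iff sum.distrib
        sum_distrib_left algebra_simps)
  moreover have "completely_positive (stochastic_Schur_channel P N)"
    using P N N_diag by (intro completely_positive_stochastic_Schur_channel)
      (auto simp: column_stochastic_def)
  moreover have "stochastic_Schur_channel P N (gibbs_state \<beta> a) = gibbs_state \<beta> a"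
    using P_gibbs by (auto simp: fun_eq_iff stochastic_Schur_channel_def gibbs_state_def
        simp flip: of_real_mult of_real_sum)
  ultimately show ?thesis
    using trace_stochastic_Schur_channel[OF P]
    by (simp add: GPC_def quantum_channel_def trace_preserving_def stochastic_Schur_channel_time_evol)
qed

definition time_covariant_at :: "('a \<Rightarrow> real) \<Rightarrow> ('a op \<Rightarrow> 'a op) \<Rightarrow> 'a op \<Rightarrow> bool" where
  "time_covariant_at a E X \<longleftrightarrow> (\<forall>t. E (time_evol a t X) = time_evol a t (E X))"

lemma time_covariant_at_lincomb:
  assumes "clinear_map E" "time_covariant_at a E X" "time_covariant_at a E Y"
  shows "time_covariant_at a E (\<lambda>x y. c * X x y + Y x y)"
proof -
  have "time_evol a t (\<lambda>x y. c * X x y + Y x y) = (\<lambda>x y. c * time_evol a t X x y + time_evol a t Y x y)"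
    for t X Y
    by (simp add: time_evol_def fun_eq_iff algebra_simps)
  then show ?thesis
    using assms by (simp add: time_covariant_at_def clinear_mapD)
qed

lemma is_state_rank_one:
  fixes f :: "'a::finite \<Rightarrow> complex"
  assumes "0 \<le> c" "(\<Sum>u\<in>UNIV. of_real c * (cnj (f u) * f u)) = 1"
  shows "is_state (\<lambda>u w. of_real c * (cnj (f u) * f w))"
  using psd_on_scale[OF assms(1) psd_on_rank_one] assms(2)
  by (simp add: is_state_def psd_def trace_def)

text \<open>Polarisation: |x><y| is a linear combination of |x><x|, |y><y| and two pure states
  supported on {x, y}.\<close>
lemma GPC_time_covariant_ket_bra:
  fixes E :: "('a::finite) op \<Rightarrow> 'a op"
  assumes G: "GPC \<beta> a E"
  shows "time_covariant_at a E (ket_bra x y)"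
proof -
  have lin: "clinear_map E"
    using G by (simp add: GPC_def quantum_channel_def)
  have state: "time_covariant_at a E \<rho>" if "is_state \<rho>" for \<rho>
    using G that by (simp add: GPC_def time_covariant_at_def)
  define e :: "'a \<Rightarrow> 'a \<Rightarrow> complex" where "e = (\<lambda>z u. if u = z then 1 else 0)"
  have ket_bra_diag: "ket_bra z z = (\<lambda>u w. of_real 1 * (cnj (e z u) * e z w))" for z
    by (auto simp: fun_eq_iff ket_bra_def e_def)
  have e_norm: "cnj (e z u) * e z u = (if u = z then 1 else 0)" for z u
    by (simp add: e_def)
  have diag: "time_covariant_at a E (ket_bra z z)" for z
    unfolding ket_bra_diag by (intro state is_state_rank_one) (simp_all add: e_norm)
  show ?thesis
  proof (cases "x = y")
    case True
    then show ?thesis using diag by simp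
  next
    case False
    define f1 where "f1 = (\<lambda>u. e x u + e y u)"
    define f2 where "f2 = (\<lambda>u. e x u + \<i> * e y u)"
    have two_point: "(\<Sum>u\<in>UNIV. g u) = g x + g y" if "\<And>u. u \<noteq> x \<Longrightarrow> u \<noteq> y \<Longrightarrow> g u = 0"
      for g :: "'a \<Rightarrow> complex"
      using False that sum.mono_neutral_right[of UNIV "{x, y}" g] by auto
    have "time_covariant_at a E (\<lambda>u w. of_real (1/2) * (cnj (f u) * f w))"
      if "f = f1 \<or> f = f2" for f
      using that False by (intro state is_state_rank_one, simp, subst two_point)
        (auto simp: f1_def f2_def e_def)
    then have "time_covariant_at a E (\<lambda>u w. 1 * (of_real (1/2) * (cnj (f1 u) * f1 w))
        + (- \<i> * (of_real (1/2) * (cnj (f2 u) * f2 w))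
        + (- (1 - \<i>) / 2 * ket_bra x x u w + (- (1 - \<i>) / 2 * ket_bra y y u w + 0))))"
      by (intro time_covariant_at_lincomb[OF lin] diag)
        (auto simp: time_covariant_at_def clinear_map_zero[OF lin] time_evol_def)
    moreover have "(\<lambda>u w. 1 * (of_real (1/2) * (cnj (f1 u) * f1 w))
        + (- \<i> * (of_real (1/2) * (cnj (f2 u) * f2 w))
        + (- (1 - \<i>) / 2 * ket_bra x x u w + (- (1 - \<i>) / 2 * ket_bra y y u w + 0)))) = ket_bra x y"
      using False by (auto simp: fun_eq_iff ket_bra_def f1_def f2_def e_def field_simps)
    ultimately show ?thesis
      by simp
  qed
qed

lemma cis_scaled_eqD:
  assumes "\<And>t. cis (A * t) = cis (B * t)"
  shows "A = B"
proof (rule ccontr)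
  assume "A \<noteq> B"
  then have "cis ((A - B) * (pi / (A - B))) = -1"
    by simp
  moreover have "cis ((A - B) * t) = 1" for t
    using assms[of t] by (simp add: left_diff_distrib flip: cis_divide)
  ultimately show False
    by (metis one_neq_neg_one)
qed

lemma GPC_ket_bra_Bohr_frequency:
  fixes E :: "('a::finite) op \<Rightarrow> 'a op"
  assumes G: "GPC \<beta> a E" and nonzero: "E (ket_bra z z') x x' \<noteq> 0"
  shows "a z - a z' = a x - a x'"
proof -
  have lin: "clinear_map E"
    using G by (simp add: GPC_def quantum_channel_def)
  have evol: "time_evol a t (ket_bra z z') = (\<lambda>u w. (cis (- (a z * t)) * cis (a z' * t)) * ket_bra z z' u w)"
    for t
    by (auto simp: time_evol_def ket_bra_def fun_eq_iff)
  have "(cis (- (a z * t)) * cis (a z' * t)) * E (ket_bra z z') x x'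
      = (cis (- (a x * t)) * cis (a x' * t)) * E (ket_bra z z') x x'" for t
  proof -
    have "E (time_evol a t (ket_bra z z')) x x' = time_evol a t (E (ket_bra z z')) x x'"
      using GPC_time_covariant_ket_bra[OF G] by (simp add: time_covariant_at_def)
    then show ?thesis
      unfolding evol clinear_map_scale[OF lin] by (simp add: time_evol_def ac_simps)
  qed
  then have "cis ((a z' - a z) * t) = cis ((a x' - a x) * t)" for t
    using nonzero by (simp add: cis_mult algebra_simps)
  then have "a z' - a z = a x' - a x"
    by (rule cis_scaled_eqD)
  then show ?thesis
    by simp
qed

lemma GPC_apply:
  fixes E :: "('a::finite) op \<Rightarrow> 'a op"
  assumes Bohr: "nondegenerate_bohr a" and G: "GPC \<beta> a E"
  shows "E X y y' = (if y = y' then (\<Sum>x\<in>UNIV. X x x * E (ket_bra x x) y y)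
    else X y y' * E (ket_bra y y') y y')"
proof -
  have lin: "clinear_map E"
    using G by (simp add: GPC_def quantum_channel_def)
  have support: "(z = y \<and> z' = y') \<or> (z = z' \<and> y = y')" if "E (ket_bra z z') y y' \<noteq> 0" for z z'
    using GPC_ket_bra_Bohr_frequency[OF G that] Bohr unfolding nondegenerate_bohr_def by blast
  have "E X y y' = (\<Sum>z\<in>UNIV. \<Sum>z'\<in>UNIV. X z z' * E (ket_bra z z') y y')"
    by (rule clinear_map_expand[OF lin])
  also have "\<dots> = (if y = y' then (\<Sum>x\<in>UNIV. X x x * E (ket_bra x x) y y)
      else X y y' * E (ket_bra y y') y y')"
  proof (cases "y = y'")
    case True
    then have "(\<Sum>z\<in>UNIV. \<Sum>z'\<in>UNIV. X z z' * E (ket_bra z z') y y')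
        = (\<Sum>z\<in>UNIV. \<Sum>z'\<in>UNIV. if z' = z then X z z * E (ket_bra z z) y y else 0)"
      using support by (intro sum.cong) auto
    then show ?thesis
      using True by simp
  next
    case False
    then have "(\<Sum>z\<in>UNIV. \<Sum>z'\<in>UNIV. X z z' * E (ket_bra z z') y y')
        = (\<Sum>z\<in>UNIV. \<Sum>z'\<in>UNIV. if z' = y' then if z = y then X y y' * E (ket_bra y y') y y' else 0 else 0)"
      using support by (intro sum.cong) auto
    then show ?thesis
      using False by simp
  qed
  finally show ?thesis .
qed

lemma quantum_channel_population_matrix:
  fixes E :: "('a::finite) op \<Rightarrow> 'a op"
  assumes "quantum_channel E"
  shows "E (ket_bra x x) y y = of_real (Re (E (ket_bra x x) y y))"
    and "column_stochastic (\<lambda>y x. Re (E (ket_bra x x) y y))"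
proof -
  have Choi: "psd_on UNIV (\<lambda>p q. E (ket_bra (fst p) (fst q)) (snd p) (snd q))"
    using assms by (intro completely_positive_Choi_psd) (simp add: quantum_channel_def)
  show "E (ket_bra x x) y y = of_real (Re (E (ket_bra x x) y y))"
    using psd_on_diag(1)[OF _ Choi, of "(x, y)"] by simp
  have nonneg: "0 \<le> Re (E (ket_bra x x) y y)" for x y
    using psd_on_diag(2)[OF _ Choi, of "(x, y)"] by simp
  have "trace (E (ket_bra x x)) = 1" for x
    using assms by (simp add: quantum_channel_def trace_preserving_def trace_def ket_bra_def)
  then have "(\<Sum>y\<in>UNIV. Re (E (ket_bra x x) y y)) = 1" for x
    by (simp add: trace_def flip: Re_sum)
  then show "column_stochastic (\<lambda>y x. Re (E (ket_bra x x) y y))"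
    using nonneg by (simp add: column_stochastic_def)
qed

lemma completely_positive_coherence_psd:
  fixes E :: "('a::finite) op \<Rightarrow> 'a op"
  assumes "completely_positive E"
  shows "psd (\<lambda>x x'. E (ket_bra x x') x x')"
  using psd_on_pullback[OF _ completely_positive_Choi_psd[OF assms], of "\<lambda>x. (x, x)" UNIV]
  by (simp add: psd_def)

lemma GPC_imp_stochastic_conditions:
  fixes E :: "('a::finite) op \<Rightarrow> 'a op"
  assumes Bohr: "nondegenerate_bohr a" and G: "GPC \<beta> a E" and "E \<rho> = \<sigma>"
    and coherent: "\<forall>x y. x \<noteq> y \<longrightarrow> \<rho> x y \<noteq> 0"
  shows "\<exists>P :: 'a \<Rightarrow> 'a \<Rightarrow> real. column_stochastic P
       \<and> (\<forall>y. (\<Sum>x\<in>UNIV. complex_of_real (P y x) * \<rho> x x) = \<sigma> y y)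
       \<and> (\<forall>y. (\<Sum>x\<in>UNIV. P y x * gibbs_vec \<beta> a x) = gibbs_vec \<beta> a y)
       \<and> psd (\<lambda>x y. if x = y then complex_of_real (P x x) else \<sigma> x y / \<rho> x y)"
proof -
  have E_apply: "E X y y' = (if y = y' then (\<Sum>x\<in>UNIV. X x x * E (ket_bra x x) y y)
      else X y y' * E (ket_bra y y') y y')" for X y y'
    by (rule GPC_apply[OF Bohr G])
  define P where "P = (\<lambda>y x. Re (E (ket_bra x x) y y))"
  have channel: "quantum_channel E"
    using G by (simp add: GPC_def)
  have P: "E (ket_bra x x) y y = of_real (P y x)" for x y
    unfolding P_def by (rule quantum_channel_population_matrix(1)[OF channel])
  have "(\<Sum>x\<in>UNIV. of_real (P y x) * \<rho> x x) = \<sigma> y y" for y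
    using E_apply[of \<rho> y y] \<open>E \<rho> = \<sigma>\<close> by (simp add: P mult.commute)
  moreover have "(\<Sum>x\<in>UNIV. P y x * gibbs_vec \<beta> a x) = gibbs_vec \<beta> a y" for y
  proof -
    have "E (gibbs_state \<beta> a) y y = gibbs_state \<beta> a y y"
      using G by (simp add: GPC_def)
    then have "of_real (\<Sum>x\<in>UNIV. P y x * gibbs_vec \<beta> a x) = complex_of_real (gibbs_vec \<beta> a y)"
      using E_apply[of "gibbs_state \<beta> a" y y] by (simp add: P gibbs_state_def mult.commute)
    then show ?thesis
      using of_real_eq_iff by blast
  qed
  moreover have "psd (\<lambda>x y. if x = y then complex_of_real (P x x) else \<sigma> x y / \<rho> x y)"
  proof -
    have "psd (\<lambda>x x'. E (ket_bra x x') x x')"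
      using channel by (intro completely_positive_coherence_psd) (simp add: quantum_channel_def)
    moreover have "(\<lambda>x x'. E (ket_bra x x') x x')
        = (\<lambda>x y. if x = y then complex_of_real (P x x) else \<sigma> x y / \<rho> x y)"
      using E_apply[of \<rho>] \<open>E \<rho> = \<sigma>\<close> coherent by (auto simp: fun_eq_iff P)
    ultimately show ?thesis
      by simp
  qed
  moreover have "column_stochastic P"
    unfolding P_def by (rule quantum_channel_population_matrix(2)[OF channel])
  ultimately show ?thesis
    by blast
qed

theorem lemma5:
  fixes a :: "'a::finite \<Rightarrow> real" and \<beta> :: real and \<rho> \<sigma> :: "'a op"
  assumes "nondegenerate_bohr a"
    and "\<beta> > 0"
    and "is_state \<rho>" and "is_state \<sigma>"
    and "\<forall>x y. x \<noteq> y \<longrightarrow> \<rho> x y \<noteq> 0"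
  shows "(\<exists>E. GPC \<beta> a E \<and> E \<rho> = \<sigma>) \<longleftrightarrow>
    (\<exists>P :: 'a \<Rightarrow> 'a \<Rightarrow> real. column_stochastic P
       \<and> (\<forall>y. (\<Sum>x\<in>UNIV. complex_of_real (P y x) * \<rho> x x) = \<sigma> y y)
       \<and> (\<forall>y. (\<Sum>x\<in>UNIV. P y x * gibbs_vec \<beta> a x) = gibbs_vec \<beta> a y)
       \<and> psd (\<lambda>x y. if x = y then complex_of_real (P x x) else \<sigma> x y / \<rho> x y))"
    (is "_ \<longleftrightarrow> (\<exists>P. ?stochastic P)")
proof
  assume "\<exists>E. GPC \<beta> a E \<and> E \<rho> = \<sigma>"
  then show "\<exists>P. ?stochastic P"
    using GPC_imp_stochastic_conditions[OF assms(1) _ _ assms(5)] by blast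
next
  assume "\<exists>P. ?stochastic P"
  then obtain P where "?stochastic P" ..
  define N where "N = (\<lambda>x y. if x = y then complex_of_real (P x x) else \<sigma> x y / \<rho> x y)"
  have "GPC \<beta> a (stochastic_Schur_channel P N)"
    using \<open>?stochastic P\<close> by (intro stochastic_Schur_channel_GPC) (simp_all add: N_def)
  moreover have "stochastic_Schur_channel P N \<rho> = \<sigma>"
    using \<open>?stochastic P\<close> assms(5) by (auto simp: fun_eq_iff stochastic_Schur_channel_def N_def)
  ultimately show "\<exists>E. GPC \<beta> a E \<and> E \<rho> = \<sigma>"
    by blast
qed

end
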